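(* Let $(X,S)$ be a faithful transformation semigroup such that $(X,S)$ divides $(S^\bullet,S)$. Then $\llbracket S\cup\overline X\rrbracket=\llbracket S^{\mathsf{bar}}\rrbracket$. In particular, if $S$ is any finite semigroup and $J$ is a right ideal of $S$ on which $S$ acts faithfully by right multiplication, then $\llbracket S^{\mathsf{bar}}\rrbracket=\llbracket S\cup\overline J\rrbracket$.
   Context: All semigroups and sets are finite. A transformation semigroup $(X,S)$ is a semigroup $S$ acting faithfully on the right of a set $X$; $\overline X$ denotes the set of constant maps on $X$, and $S\cup\overline X$ is the transformation semigroup on $X$ generated by (equal to) $S$ together with these constant maps. Division of transformation semigroups is in Eilenberg's sense: $(X,S)$ divides $(Y,T)$ if there is a surjective partial map $\varphi$ from $Y$ onto $X$ such that for every $s\in S$ there is $t\in T$ with $(y\varphi)s=(yt)\varphi$ for all $y$ in the domain of $\varphi$ (and $yt$ in the domain of $\varphi$). For a semigroup $S$, $S^\bullet=S$ if $S$ is a monoid and $S^\bullet=S^I$ (external identity adjoined) otherwise; $(S^\bullet,S)$ is the action by right multiplication, and $S^{\mathsf{bar}}$ is the transformation semigroup on $S^\bullet$ consisting of these right multiplications together with all constant maps on $S^\bullet$. $\llbracket S\rrbracket$ is the pseudovariety generated by $S$. *)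

theory Defs
  imports Main "HOL-Library.FuncSet"
begin

definition semigroup_on :: "'a set \<Rightarrow> ('a \<Rightarrow> 'a \<Rightarrow> 'a) \<Rightarrow> bool" where
  "semigroup_on A m \<longleftrightarrow> finite A \<and> A \<noteq> {} \<and>
     (\<forall>x\<in>A. \<forall>y\<in>A. m x y \<in> A) \<and>
     (\<forall>x\<in>A. \<forall>y\<in>A. \<forall>z\<in>A. m (m x y) z = m x (m y z))"

definition is_monoid_on :: "'a set \<Rightarrow> ('a \<Rightarrow> 'a \<Rightarrow> 'a) \<Rightarrow> bool" where
  "is_monoid_on A m \<longleftrightarrow> (\<exists>e\<in>A. \<forall>x\<in>A. m e x = x \<and> m x e = x)"

definition hom_on :: "'a set \<Rightarrow> ('a \<Rightarrow> 'a \<Rightarrow> 'a) \<Rightarrow> 'b set \<Rightarrow> ('b \<Rightarrow> 'b \<Rightarrow> 'b) \<Rightarrow> ('a \<Rightarrow> 'b) \<Rightarrow> bool" where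
  "hom_on A m B n h \<longleftrightarrow> (\<forall>x\<in>A. h x \<in> B) \<and> (\<forall>x\<in>A. \<forall>y\<in>A. h (m x y) = n (h x) (h y))"

definition sg_divides :: "'u set \<times> ('u \<Rightarrow> 'u \<Rightarrow> 'u) \<Rightarrow> 'v set \<times> ('v \<Rightarrow> 'v \<Rightarrow> 'v) \<Rightarrow> bool" where
  "sg_divides U V \<longleftrightarrow> (\<exists>W h. W \<subseteq> fst V \<and> W \<noteq> {} \<and> (\<forall>x\<in>W. \<forall>y\<in>W. snd V x y \<in> W) \<and>
       hom_on W (snd V) (fst U) (snd U) h \<and> h ` W = fst U)"

definition sg_power :: "nat \<Rightarrow> 'v set \<times> ('v \<Rightarrow> 'v \<Rightarrow> 'v) \<Rightarrow> (nat \<Rightarrow> 'v) set \<times> ((nat \<Rightarrow> 'v) \<Rightarrow> (nat \<Rightarrow> 'v) \<Rightarrow> (nat \<Rightarrow> 'v))" where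
  "sg_power n V = (PiE {..<n} (\<lambda>_. fst V), (\<lambda>f g. \<lambda>i\<in>{..<n}. snd V (f i) (g i)))"

text \<open>Membership in the pseudovariety generated by V: the finite semigroups
  dividing some finite direct power of V.\<close>
definition pv_mem :: "'u set \<times> ('u \<Rightarrow> 'u \<Rightarrow> 'u) \<Rightarrow> 'v set \<times> ('v \<Rightarrow> 'v \<Rightarrow> 'v) \<Rightarrow> bool" where
  "pv_mem U V \<longleftrightarrow> semigroup_on (fst U) (snd U) \<and> (\<exists>n\<ge>1. sg_divides U (sg_power n V))"

definition faithful_action :: "'x set \<Rightarrow> ('x \<Rightarrow> 'a \<Rightarrow> 'x) \<Rightarrow> 'a set \<Rightarrow> ('a \<Rightarrow> 'a \<Rightarrow> 'a) \<Rightarrow> bool" where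
  "faithful_action X act S m \<longleftrightarrow>
     (\<forall>x\<in>X. \<forall>s\<in>S. act x s \<in> X) \<and>
     (\<forall>x\<in>X. \<forall>s\<in>S. \<forall>t\<in>S. act x (m s t) = act (act x s) t) \<and>
     (\<forall>s\<in>S. \<forall>t\<in>S. (\<forall>x\<in>X. act x s = act x t) \<longrightarrow> s = t)"

definition maps_of :: "'x set \<Rightarrow> ('x \<Rightarrow> 'a \<Rightarrow> 'x) \<Rightarrow> 'a set \<Rightarrow> ('x \<Rightarrow> 'x) set" where
  "maps_of X act S = (\<lambda>s. \<lambda>x\<in>X. act x s) ` S"

definition consts_on :: "'x set \<Rightarrow> ('x \<Rightarrow> 'x) set" where
  "consts_on X = (\<lambda>c. \<lambda>x\<in>X. c) ` X"

definition comp_on :: "'x set \<Rightarrow> ('x \<Rightarrow> 'x) \<Rightarrow> ('x \<Rightarrow> 'x) \<Rightarrow> ('x \<Rightarrow> 'x)" where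
  "comp_on X f g = (\<lambda>x\<in>X. g (f x))"

definition with_consts :: "'x set \<Rightarrow> ('x \<Rightarrow> 'a \<Rightarrow> 'x) \<Rightarrow> 'a set \<Rightarrow> ('x \<Rightarrow> 'x) set \<times> (('x \<Rightarrow> 'x) \<Rightarrow> ('x \<Rightarrow> 'x) \<Rightarrow> ('x \<Rightarrow> 'x))" where
  "with_consts X act S = (maps_of X act S \<union> consts_on X, comp_on X)"

definition ts_divides :: "'x set \<times> ('x \<Rightarrow> 'x) set \<Rightarrow> 'y set \<times> ('y \<Rightarrow> 'y) set \<Rightarrow> bool" where
  "ts_divides XS YT \<longleftrightarrow> (\<exists>D phi. D \<subseteq> fst YT \<and> phi ` D = fst XS \<and>
     (\<forall>s\<in>snd XS. \<exists>t\<in>snd YT. \<forall>y\<in>D. t y \<in> D \<and> s (phi y) = phi (t y)))"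

text \<open>S^bullet: S itself if S is a monoid, otherwise S with an external identity
  (represented by None) adjoined.\<close>
definition Sdot :: "'a set \<Rightarrow> ('a \<Rightarrow> 'a \<Rightarrow> 'a) \<Rightarrow> 'a option set" where
  "Sdot S m = (if is_monoid_on S m then Some ` S else insert None (Some ` S))"

fun mdot :: "('a \<Rightarrow> 'a \<Rightarrow> 'a) \<Rightarrow> 'a option \<Rightarrow> 'a option \<Rightarrow> 'a option" where
  "mdot m None y = y"
| "mdot m x None = x"
| "mdot m (Some a) (Some b) = Some (m a b)"

definition rmult :: "('a \<Rightarrow> 'a \<Rightarrow> 'a) \<Rightarrow> 'a option \<Rightarrow> 'a \<Rightarrow> 'a option" where
  "rmult m y s = mdot m y (Some s)"

definition Sbar :: "'a set \<Rightarrow> ('a \<Rightarrow> 'a \<Rightarrow> 'a) \<Rightarrow> ('a option \<Rightarrow> 'a option) set \<times> (('a option \<Rightarrow> 'a option) \<Rightarrow> ('a option \<Rightarrow> 'a option) \<Rightarrow> ('a option \<Rightarrow> 'a option))" where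
  "Sbar S m = with_consts (Sdot S m) (rmult m) S"

definition right_ideal :: "'a set \<Rightarrow> ('a \<Rightarrow> 'a \<Rightarrow> 'a) \<Rightarrow> 'a set \<Rightarrow> bool" where
  "right_ideal S m J \<longleftrightarrow> J \<subseteq> S \<and> J \<noteq> {} \<and> (\<forall>j\<in>J. \<forall>s\<in>S. m j s \<in> J)"

end

theory Submission
  imports Defs
begin

text \<open>Both pseudovarieties are compared through two divisions. A division of
  (X,S) into (S^\<bullet>,S) extends to the constant maps, since the constant x = \<phi>(y)
  is covered by the constant y; and a division of transformation semigroups is a
  division of the underlying semigroups, so S \<union> X-bar divides S^bar. Conversely
  S^bar divides the power (S \<union> X-bar)^X: right multiplication by s is related to
  the diagonal family (s)_x and the constant map y to the family of constant maps
  (x\<cdot>y)_x. Faithfulness makes this relational morphism injective, the only subtle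
  case being a right multiplication that is constant on S^\<bullet>. For a right ideal J,
  (J,S) divides (S^\<bullet>,S) through the inclusion J \<subseteq> S^\<bullet>.\<close>

section \<open>Division and direct powers\<close>

definition magma :: "'a set \<times> ('a \<Rightarrow> 'a \<Rightarrow> 'a) \<Rightarrow> bool" where
  "magma V \<longleftrightarrow> fst V \<noteq> {} \<and> (\<forall>x\<in>fst V. \<forall>y\<in>fst V. snd V x y \<in> fst V)"

lemma sg_divides_trans [trans]:
  assumes "sg_divides U V" "sg_divides V W" shows "sg_divides U W"
proof -
  obtain W1 h where W1: "W1 \<subseteq> fst V" "W1 \<noteq> {}" "\<forall>x\<in>W1. \<forall>y\<in>W1. snd V x y \<in> W1"
     "hom_on W1 (snd V) (fst U) (snd U) h" "h ` W1 = fst U"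
    using assms(1) unfolding sg_divides_def by blast
  obtain W2 g where W2: "W2 \<subseteq> fst W" "W2 \<noteq> {}" "\<forall>x\<in>W2. \<forall>y\<in>W2. snd W x y \<in> W2"
     "hom_on W2 (snd W) (fst V) (snd V) g" "g ` W2 = fst V"
    using assms(2) unfolding sg_divides_def by blast
  let ?W = "{x\<in>W2. g x \<in> W1}"
  have gW: "g ` ?W = W1" using W1(1) W2(5) by auto
  show ?thesis unfolding sg_divides_def
  proof (intro exI[of _ ?W] exI[of _ "h \<circ> g"] conjI)
    show "?W \<subseteq> fst W" using W2 by auto
    show "?W \<noteq> {}" using gW W1(2) by auto
    show "\<forall>x\<in>?W. \<forall>y\<in>?W. snd W x y \<in> ?W"
      using W2(3,4) W1(3) unfolding hom_on_def by auto
    show "hom_on ?W (snd W) (fst U) (snd U) (h \<circ> g)"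
      using W2(3,4) W1(3,4) unfolding hom_on_def by auto
    show "(h \<circ> g) ` ?W = fst U" using gW W1(5) by (metis image_comp)
  qed
qed

lemma sg_divides_sg_power:
  assumes "sg_divides U V" shows "sg_divides (sg_power n U) (sg_power n V)"
proof -
  obtain W1 h where W1: "W1 \<subseteq> fst V" "W1 \<noteq> {}" "\<forall>x\<in>W1. \<forall>y\<in>W1. snd V x y \<in> W1"
     "hom_on W1 (snd V) (fst U) (snd U) h" "h ` W1 = fst U"
    using assms unfolding sg_divides_def by blast
  let ?W = "PiE {..<n} (\<lambda>_. W1)"
  let ?H = "\<lambda>f. \<lambda>i\<in>{..<n}. h (f i)"
  have onto: "PiE {..<n} (\<lambda>_. fst U) \<subseteq> ?H ` ?W"
  proof
    fix F assume F: "F \<in> PiE {..<n} (\<lambda>_. fst U)"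
    let ?f = "\<lambda>i\<in>{..<n}. inv_into W1 h (F i)"
    have "?f \<in> ?W" and "F = ?H ?f"
      using F W1(5) by (auto simp: inv_into_into f_inv_into_f PiE_iff extensional_def)
    then show "F \<in> ?H ` ?W" using image_eqI[of F ?H ?f ?W] by simp
  qed
  show ?thesis unfolding sg_divides_def sg_power_def fst_conv snd_conv
  proof (intro exI[of _ ?W] exI[of _ ?H] conjI)
    show "?W \<subseteq> PiE {..<n} (\<lambda>_. fst V)" using W1(1) by (auto intro: PiE_mono)
    show "?W \<noteq> {}" using W1(2) by (simp add: PiE_eq_empty_iff)
    show "\<forall>x\<in>?W. \<forall>y\<in>?W. (\<lambda>i\<in>{..<n}. snd V (x i) (y i)) \<in> ?W"
      using W1(3) by auto
    show "hom_on ?W (\<lambda>f g. \<lambda>i\<in>{..<n}. snd V (f i) (g i)) (PiE {..<n} (\<lambda>_. fst U))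
          (\<lambda>f g. \<lambda>i\<in>{..<n}. snd U (f i) (g i)) ?H"
      using W1(4) unfolding hom_on_def by (auto simp: PiE_iff fun_eq_iff)
    show "?H ` ?W = PiE {..<n} (\<lambda>_. fst U)" using onto W1(5) by fastforce
  qed
qed

lemma sg_divides_sg_power_le:
  assumes "k \<le> l" and "magma V"
  shows "sg_divides (sg_power k V) (sg_power l V)"
proof -
  obtain v where v: "v \<in> fst V" using assms(2) unfolding magma_def by blast
  have cl: "\<forall>x\<in>fst V. \<forall>y\<in>fst V. snd V x y \<in> fst V" using assms(2) unfolding magma_def by blast
  let ?W = "PiE {..<l} (\<lambda>_. fst V)"
  let ?h = "\<lambda>f. restrict f {..<k}"
  have restr: "{..<l} \<inter> {..<k} = {..<k}" using assms(1) by auto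
  have onto: "PiE {..<k} (\<lambda>_. fst V) \<subseteq> ?h ` ?W"
  proof
    fix F assume F: "F \<in> PiE {..<k} (\<lambda>_. fst V)"
    let ?f = "\<lambda>i\<in>{..<l}. if i < k then F i else v"
    have "?f \<in> ?W" using F v by (simp add: PiE_iff)
    moreover have "F = ?h ?f"
      using F restr by (auto simp: PiE_iff extensional_def fun_eq_iff)
    ultimately show "F \<in> ?h ` ?W" using image_eqI[of F ?h ?f ?W] by simp
  qed
  show ?thesis unfolding sg_divides_def sg_power_def fst_conv snd_conv
  proof (intro exI[of _ ?W] exI[of _ ?h] conjI)
    show "?W \<noteq> {}" using v by (auto simp: PiE_eq_empty_iff)
    show "\<forall>x\<in>?W. \<forall>y\<in>?W. (\<lambda>i\<in>{..<l}. snd V (x i) (y i)) \<in> ?W"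
      using cl by auto
    show "hom_on ?W (\<lambda>f g. \<lambda>i\<in>{..<l}. snd V (f i) (g i)) (PiE {..<k} (\<lambda>_. fst V))
          (\<lambda>f g. \<lambda>i\<in>{..<k}. snd V (f i) (g i)) ?h"
      unfolding hom_on_def using assms(1) cl by (auto simp: restrict_def fun_eq_iff PiE_iff extensional_def)
    show "?h ` ?W = PiE {..<k} (\<lambda>_. fst V)" using onto assms(1) by fastforce
  qed simp
qed

lemma sg_divides_sg_power_mult:
  assumes "magma V"
  shows "sg_divides (sg_power n (sg_power k V)) (sg_power (n * k) V)"
proof -
  have cl: "\<forall>x\<in>fst V. \<forall>y\<in>fst V. snd V x y \<in> fst V" using assms unfolding magma_def by blast
  let ?W = "PiE {..<n * k} (\<lambda>_. fst V)"
  let ?H = "\<lambda>f. \<lambda>i\<in>{..<n}. \<lambda>j\<in>{..<k}. f (i * k + j)"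
  have index: "i * k + j < n * k" if "i < n" "j < k" for i j
  proof -
    have "i * k + j < Suc i * k" using that(2) by simp
    also have "\<dots> \<le> n * k" using that(1) by (intro mult_right_mono) auto
    finally show ?thesis .
  qed
  have onto: "PiE {..<n} (\<lambda>_. PiE {..<k} (\<lambda>_. fst V)) \<subseteq> ?H ` ?W"
  proof
    fix F assume F: "F \<in> PiE {..<n} (\<lambda>_. PiE {..<k} (\<lambda>_. fst V))"
    let ?f = "\<lambda>p\<in>{..<n * k}. F (p div k) (p mod k)"
    have "p div k < n" "p mod k < k" if p: "p < n * k" for p
    proof -
      have "0 < k" using p by (cases k) auto
      then show "p div k < n" "p mod k < k" using p by (simp_all add: div_less_iff_less_mult)
    qed
    then have "?f \<in> ?W" using F by auto
    moreover have "F = ?H ?f"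
      using F index by (auto simp: fun_eq_iff PiE_iff extensional_def)
    ultimately show "F \<in> ?H ` ?W" using image_eqI[of F ?H ?f ?W] by simp
  qed
  show ?thesis unfolding sg_divides_def sg_power_def fst_conv snd_conv
  proof (intro exI[of _ ?W] exI[of _ ?H] conjI)
    show "?W \<noteq> {}" using assms unfolding magma_def by (auto simp: PiE_eq_empty_iff)
    show "\<forall>x\<in>?W. \<forall>y\<in>?W. (\<lambda>i\<in>{..<n * k}. snd V (x i) (y i)) \<in> ?W"
      using cl by auto
    show "hom_on ?W (\<lambda>f g. \<lambda>i\<in>{..<n * k}. snd V (f i) (g i)) (PiE {..<n} (\<lambda>_. PiE {..<k} (\<lambda>_. fst V)))
          (\<lambda>f g. \<lambda>i\<in>{..<n}. (\<lambda>f g. \<lambda>i\<in>{..<k}. snd V (f i) (g i)) (f i) (g i)) ?H"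
      unfolding hom_on_def using index by (auto simp: fun_eq_iff)
    show "?H ` ?W = PiE {..<n} (\<lambda>_. PiE {..<k} (\<lambda>_. fst V))" using onto index by fastforce
  qed simp
qed

lemma pv_mem_if_sg_divides:
  assumes "sg_divides A B" and "pv_mem U A"
  shows "pv_mem U B"
proof -
  obtain n where "n \<ge> 1" and U: "sg_divides U (sg_power n A)"
    and "semigroup_on (fst U) (snd U)"
    using assms(2) unfolding pv_mem_def by blast
  note U
  also have "sg_divides (sg_power n A) (sg_power n B)"
    using assms(1) by (rule sg_divides_sg_power)
  finally show ?thesis using \<open>n \<ge> 1\<close> \<open>semigroup_on (fst U) (snd U)\<close>
    unfolding pv_mem_def by blast
qed

lemma pv_mem_of_sg_power:
  assumes "magma B" and "pv_mem U (sg_power k B)"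
  shows "pv_mem U B"
proof -
  obtain n where U: "sg_divides U (sg_power n (sg_power k B))"
    and "semigroup_on (fst U) (snd U)"
    using assms(2) unfolding pv_mem_def by blast
  note U
  also have "sg_divides (sg_power n (sg_power k B)) (sg_power (n * k) B)"
    using assms(1) by (rule sg_divides_sg_power_mult)
  also have "sg_divides (sg_power (n * k) B) (sg_power (max 1 (n * k)) B)"
    using assms(1) by (intro sg_divides_sg_power_le) auto
  finally show ?thesis using \<open>semigroup_on (fst U) (snd U)\<close>
    unfolding pv_mem_def by (metis max.cobounded1)
qed

lemma sg_divides_if_injective_relation:
  assumes dom: "\<And>a w. R a w \<Longrightarrow> a \<in> fst U \<and> w \<in> fst V"
    and total: "\<And>a. a \<in> fst U \<Longrightarrow> \<exists>w. R a w"
    and mult: "\<And>a b v w. R a v \<Longrightarrow> R b w \<Longrightarrow> R (snd U a b) (snd V v w)"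
    and inj: "\<And>a b w. R a w \<Longrightarrow> R b w \<Longrightarrow> a = b"
    and "fst U \<noteq> {}"
  shows "sg_divides U V"
proof -
  define W where "W = {w. \<exists>a. R a w}"
  define h where "h w = (THE a. R a w)" for w
  have h: "h w = a" if "R a w" for a w
    unfolding h_def using that inj by blast
  show ?thesis unfolding sg_divides_def
  proof (intro exI[of _ W] exI[of _ h] conjI)
    show "W \<subseteq> fst V" using dom unfolding W_def by blast
    show "W \<noteq> {}" using \<open>fst U \<noteq> {}\<close> total unfolding W_def by blast
    show "\<forall>v\<in>W. \<forall>w\<in>W. snd V v w \<in> W" using mult unfolding W_def by blast
    show "hom_on W (snd V) (fst U) (snd U) h"
      unfolding hom_on_def W_def using dom mult h by fastforce
    show "h ` W = fst U" using dom total h unfolding W_def by blast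
  qed
qed

section \<open>Transformation semigroups with constant maps\<close>

abbreviation act_map :: "'x set \<Rightarrow> ('x \<Rightarrow> 'a \<Rightarrow> 'x) \<Rightarrow> 'a \<Rightarrow> 'x \<Rightarrow> 'x" where
  "act_map X act s \<equiv> \<lambda>x\<in>X. act x s"

abbreviation const_map :: "'x set \<Rightarrow> 'x \<Rightarrow> 'x \<Rightarrow> 'x" where
  "const_map X c \<equiv> \<lambda>x\<in>X. c"

lemma comp_on_act_map:
  assumes "faithful_action X act S m" "s \<in> S" "t \<in> S"
  shows "comp_on X (act_map X act s) (act_map X act t) = act_map X act (m s t)"
  using assms unfolding faithful_action_def comp_on_def by (auto simp: fun_eq_iff)

lemma comp_on_act_map_const_map:
  assumes "faithful_action X act S m" "s \<in> S"
  shows "comp_on X (act_map X act s) (const_map X c) = const_map X c"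
  using assms unfolding faithful_action_def comp_on_def by (auto simp: fun_eq_iff)

lemma comp_on_const_map_act_map:
  "c \<in> X \<Longrightarrow> comp_on X (const_map X c) (act_map X act t) = const_map X (act c t)"
  unfolding comp_on_def by (auto simp: fun_eq_iff)

lemma comp_on_const_map:
  "c \<in> X \<Longrightarrow> comp_on X (const_map X c) (const_map X d) = const_map X d"
  unfolding comp_on_def by (auto simp: fun_eq_iff)

lemma magma_with_consts:
  assumes sg: "semigroup_on S m" and act: "faithful_action X act S m"
  shows "magma (with_consts X act S)"
proof -
  have closed: "\<forall>x\<in>X. \<forall>s\<in>S. act x s \<in> X" using act unfolding faithful_action_def by blast
  have "comp_on X f g \<in> maps_of X act S \<union> consts_on X"
    if "f \<in> maps_of X act S \<union> consts_on X" "g \<in> maps_of X act S \<union> consts_on X" for f g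
  proof -
    from that consider
        (maps) s t where "s \<in> S" "t \<in> S" "f = act_map X act s" "g = act_map X act t"
      | (map_const) s d where "s \<in> S" "d \<in> X" "f = act_map X act s" "g = const_map X d"
      | (const_act) c t where "c \<in> X" "t \<in> S" "f = const_map X c" "g = act_map X act t"
      | (const_const) c d where "c \<in> X" "d \<in> X" "f = const_map X c" "g = const_map X d"
      unfolding maps_of_def consts_on_def by blast
    then show ?thesis
    proof cases
      case maps
      moreover have "m s t \<in> S" using maps sg unfolding semigroup_on_def by blast
      ultimately show ?thesis by (simp add: comp_on_act_map[OF act] maps_of_def)
    next
      case map_const
      then show ?thesis by (simp add: comp_on_act_map_const_map[OF act] consts_on_def)
    next
      case const_act
      then show ?thesis using closed by (simp add: comp_on_const_map_act_map consts_on_def)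
    next
      case const_const
      then show ?thesis by (simp add: comp_on_const_map consts_on_def)
    qed
  qed
  moreover have "maps_of X act S \<noteq> {}"
    using sg unfolding maps_of_def semigroup_on_def by blast
  ultimately show ?thesis unfolding magma_def with_consts_def by auto
qed

lemma with_consts_extensional: "fst (with_consts X act S) \<subseteq> extensional X"
  unfolding with_consts_def maps_of_def consts_on_def by auto

lemma faithful_action_rmult:
  assumes sg: "semigroup_on S m"
  shows "faithful_action (Sdot S m) (rmult m) S m"
  unfolding faithful_action_def
proof (intro conjI ballI impI)
  fix y s assume "y \<in> Sdot S m" "s \<in> S"
  then show "rmult m y s \<in> Sdot S m"
    using sg by (auto simp: Sdot_def rmult_def semigroup_on_def split: if_splits)
next
  fix y s t assume "y \<in> Sdot S m" "s \<in> S" "t \<in> S"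
  then show "rmult m y (m s t) = rmult m (rmult m y s) t"
    using sg by (auto simp: Sdot_def rmult_def semigroup_on_def split: if_splits)
next
  fix s t assume s: "s \<in> S" and t: "t \<in> S" and eq: "\<forall>y\<in>Sdot S m. rmult m y s = rmult m y t"
  obtain y where "y \<in> Sdot S m" "\<forall>u\<in>S. rmult m y u = Some u"
  proof (cases "is_monoid_on S m")
    case True
    then obtain e where "e \<in> S" "\<forall>u\<in>S. m e u = u" unfolding is_monoid_on_def by blast
    then show ?thesis using that[of "Some e"] True by (simp add: Sdot_def rmult_def)
  next
    case False
    then show ?thesis using that[of None] by (simp add: Sdot_def rmult_def)
  qed
  then show "s = t" using eq s t by force
qed

lemma ts_divides_add_consts:
  assumes "ts_divides (X, A) (Y, B)"
  shows "ts_divides (X, A \<union> consts_on X) (Y, B \<union> consts_on Y)"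
proof -
  obtain D phi where D: "D \<subseteq> Y" "phi ` D = X"
    and cover: "\<forall>a\<in>A. \<exists>f\<in>B. \<forall>y\<in>D. f y \<in> D \<and> a (phi y) = phi (f y)"
    using assms unfolding ts_divides_def by auto
  have const_cover: "\<exists>f\<in>consts_on Y. \<forall>y\<in>D. f y \<in> D \<and> a (phi y) = phi (f y)"
    if "a \<in> consts_on X" for a
  proof -
    obtain y0 where "y0 \<in> D" "a = const_map X (phi y0)"
      using \<open>a \<in> consts_on X\<close> D(2) unfolding consts_on_def by auto
    then show ?thesis using D unfolding consts_on_def by (intro bexI[of _ "const_map Y y0"]) auto
  qed
  have "\<exists>f\<in>B \<union> consts_on Y. \<forall>y\<in>D. f y \<in> D \<and> a (phi y) = phi (f y)"
    if "a \<in> A \<union> consts_on X" for a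
    using that cover const_cover by blast
  then show ?thesis using D unfolding ts_divides_def fst_conv snd_conv by blast
qed

lemma sg_divides_if_ts_divides:
  assumes ts: "ts_divides (X, A) (Y, B)"
    and "magma (A, comp_on X)" "magma (B, comp_on Y)" and "A \<subseteq> extensional X"
  shows "sg_divides (A, comp_on X) (B, comp_on Y)"
proof -
  obtain D phi where D: "D \<subseteq> Y" "phi ` D = X"
    and cover: "\<forall>a\<in>A. \<exists>f\<in>B. \<forall>y\<in>D. f y \<in> D \<and> a (phi y) = phi (f y)"
    using ts unfolding ts_divides_def by auto
  have closed: "comp_on X a b \<in> A" "comp_on Y f g \<in> B" if "a \<in> A" "b \<in> A" "f \<in> B" "g \<in> B" for a b f g
    using assms(2,3) that unfolding magma_def by auto
  define R where "R a f \<longleftrightarrow> a \<in> A \<and> f \<in> B \<and> (\<forall>y\<in>D. f y \<in> D \<and> a (phi y) = phi (f y))" for a f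
  show ?thesis
  proof (rule sg_divides_if_injective_relation[where R = R], unfold fst_conv snd_conv)
    show "a \<in> A \<and> f \<in> B" if "R a f" for a f using that unfolding R_def by blast
    show "\<exists>f. R a f" if "a \<in> A" for a using that cover unfolding R_def by blast
    show "R (comp_on X a b) (comp_on Y f g)" if "R a f" "R b g" for a b f g
      using that closed D unfolding R_def comp_on_def by (auto simp: subset_iff)
    show "a = b" if "R a f" "R b f" for a b f
    proof (rule extensionalityI)
      show "a \<in> extensional X" "b \<in> extensional X" using that assms(4) unfolding R_def by auto
      show "a x = b x" if "x \<in> X" for x
        using \<open>x \<in> X\<close> \<open>R a f\<close> \<open>R b f\<close> D(2) unfolding R_def by auto
    qed
    show "A \<noteq> {}" using assms(2) unfolding magma_def by simp
  qed
qed

lemma with_consts_sg_divides_if_ts_divides: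
  assumes "semigroup_on S m" "faithful_action X act S m"
    and "semigroup_on T m'" "faithful_action Y act' T m'"
    and "ts_divides (X, maps_of X act S) (Y, maps_of Y act' T)"
  shows "sg_divides (with_consts X act S) (with_consts Y act' T)"
proof -
  have "magma (maps_of X act S \<union> consts_on X, comp_on X)"
    "magma (maps_of Y act' T \<union> consts_on Y, comp_on Y)"
    "maps_of X act S \<union> consts_on X \<subseteq> extensional X"
    using magma_with_consts[OF assms(1,2)] magma_with_consts[OF assms(3,4)]
      with_consts_extensional[of X act S]
    unfolding with_consts_def by simp_all
  with ts_divides_add_consts[OF assms(5)] show ?thesis
    unfolding with_consts_def by (rule sg_divides_if_ts_divides)
qed

section \<open>Embedding S-bar into a power of S with constants\<close>

lemma monoid_if_acts_as_identity:
  assumes sg: "semigroup_on S m" and act: "faithful_action X act S m"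
    and "b \<in> S" and b: "\<forall>x\<in>X. act x b = x"
  shows "is_monoid_on S m"
proof -
  have "m b s = s \<and> m s b = s" if s: "s \<in> S" for s
  proof -
    have "m b s \<in> S" "m s b \<in> S" using sg s \<open>b \<in> S\<close> unfolding semigroup_on_def by auto
    moreover have "\<forall>x\<in>X. act x (m b s) = act x s" "\<forall>x\<in>X. act x (m s b) = act x s"
      using act s \<open>b \<in> S\<close> b unfolding faithful_action_def by auto
    ultimately show ?thesis using act s unfolding faithful_action_def by blast
  qed
  then show ?thesis using \<open>b \<in> S\<close> unfolding is_monoid_on_def by blast
qed

definition act_opt :: "('x \<Rightarrow> 'a \<Rightarrow> 'x) \<Rightarrow> 'x \<Rightarrow> 'a option \<Rightarrow> 'x" where
  "act_opt act x y = (case y of None \<Rightarrow> x | Some s \<Rightarrow> act x s)"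

lemma act_opt_in:
  "faithful_action X act S m \<Longrightarrow> x \<in> X \<Longrightarrow> y \<in> Sdot S m \<Longrightarrow> act_opt act x y \<in> X"
  by (auto simp: act_opt_def Sdot_def faithful_action_def split: if_splits)

lemma act_opt_rmult:
  "faithful_action X act S m \<Longrightarrow> x \<in> X \<Longrightarrow> y \<in> Sdot S m \<Longrightarrow> t \<in> S
    \<Longrightarrow> act_opt act x (rmult m y t) = act (act_opt act x y) t"
  by (auto simp: act_opt_def rmult_def Sdot_def faithful_action_def split: if_splits)

lemma act_opt_faithful:
  assumes "semigroup_on S m" and act: "faithful_action X act S m"
    and y: "y \<in> Sdot S m" and z: "z \<in> Sdot S m"
    and eq: "\<forall>x\<in>X. act_opt act x y = act_opt act x z"
  shows "y = z"
proof -
  have identity_only_in_monoid: "is_monoid_on S m"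
    if "b \<in> S" "\<forall>x\<in>X. act_opt act x (Some b) = act_opt act x None" for b
    using monoid_if_acts_as_identity[OF assms(1,2)] that by (simp add: act_opt_def)
  show ?thesis
  proof (cases y; cases z)
    fix a b assume "y = Some a" "z = Some b"
    then show ?thesis using y z eq act unfolding act_opt_def Sdot_def faithful_action_def
      by (auto split: if_splits)
  next
    fix b assume "y = None" "z = Some b"
    then show ?thesis using y z eq identity_only_in_monoid by (auto simp: Sdot_def split: if_splits)
  next
    fix a assume "y = Some a" "z = None"
    then show ?thesis using y z eq identity_only_in_monoid by (auto simp: Sdot_def split: if_splits)
  qed simp
qed

text \<open>The hypothesis forces y = s and makes s a right zero of S^\<bullet>.\<close>
lemma act_map_rmult_eq_const_map:
  assumes sg: "semigroup_on S m" and act: "faithful_action X act S m"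
    and s: "s \<in> S" and y: "y \<in> Sdot S m"
    and const: "\<forall>x\<in>X. \<forall>z\<in>X. act z s = act_opt act x y"
  shows "act_map (Sdot S m) (rmult m) s = const_map (Sdot S m) y"
proof -
  have "y = Some s"
  proof (rule act_opt_faithful[OF sg act y])
    show "Some s \<in> Sdot S m" using s by (simp add: Sdot_def)
    show "\<forall>x\<in>X. act_opt act x y = act_opt act x (Some s)"
      using const by (simp add: act_opt_def)
  qed
  have right_zero: "m t s = s" if t: "t \<in> S" for t
  proof -
    have "act x (m t s) = act x s" if x: "x \<in> X" for x
    proof -
      have "act x t \<in> X" "act x (m t s) = act (act x t) s"
        using act x t s unfolding faithful_action_def by auto
      then show ?thesis using const x by metis
    qed
    moreover have "m t s \<in> S" using sg s t unfolding semigroup_on_def by blast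
    ultimately show ?thesis using act s unfolding faithful_action_def by blast
  qed
  show ?thesis
    using \<open>y = Some s\<close> right_zero
    by (intro restrict_ext) (auto simp: rmult_def Sdot_def split: if_splits)
qed

text \<open>It is not a function: a
  right multiplication of S^bar may coincide with a constant map although their
  images differ.\<close>
locale enumerated_action =
  fixes S :: "'a set" and m and X :: "'x set" and act and n :: nat and e :: "nat \<Rightarrow> 'x"
  assumes sg: "semigroup_on S m" and faithful: "faithful_action X act S m"
    and enum: "bij_betw e {..<n} X"
begin

definition diag :: "'a \<Rightarrow> nat \<Rightarrow> 'x \<Rightarrow> 'x" where
  "diag s = (\<lambda>i\<in>{..<n}. act_map X act s)"

definition constants :: "'a option \<Rightarrow> nat \<Rightarrow> 'x \<Rightarrow> 'x" where
  "constants y = (\<lambda>i\<in>{..<n}. const_map X (act_opt act (e i) y))"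

definition rel :: "('a option \<Rightarrow> 'a option) \<Rightarrow> (nat \<Rightarrow> 'x \<Rightarrow> 'x) \<Rightarrow> bool" where
  "rel f w \<longleftrightarrow> (\<exists>s\<in>S. f = act_map (Sdot S m) (rmult m) s \<and> w = diag s)
     \<or> (\<exists>y\<in>Sdot S m. f = const_map (Sdot S m) y \<and> w = constants y)"

lemma enum_in: "i < n \<Longrightarrow> e i \<in> X"
  using enum by (auto dest: bij_betw_apply)

lemma enum_onto: "x \<in> X \<Longrightarrow> \<exists>i<n. e i = x"
  using enum unfolding bij_betw_def by force

lemma diag_inj:
  assumes "s \<in> S" "t \<in> S" "diag s = diag t"
  shows "s = t"
proof -
  have "act x s = act x t" if x: "x \<in> X" for x
  proof -
    obtain i where "i < n" using enum_onto[OF x] by blast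
    moreover have "diag s i x = diag t i x" using \<open>diag s = diag t\<close> by simp
    ultimately show ?thesis using x unfolding diag_def by simp
  qed
  then show ?thesis using faithful assms(1,2) unfolding faithful_action_def by blast
qed

lemma constants_inj:
  assumes "y \<in> Sdot S m" "z \<in> Sdot S m" "constants y = constants z"
  shows "y = z"
proof (rule act_opt_faithful[OF sg faithful assms(1,2)])
  show "\<forall>x\<in>X. act_opt act x y = act_opt act x z"
  proof
    fix x assume "x \<in> X"
    then obtain i where "i < n" "e i = x" using enum_onto by blast
    moreover have "constants y i x = constants z i x" using \<open>constants y = constants z\<close> by simp
    ultimately show "act_opt act x y = act_opt act x z" using \<open>x \<in> X\<close> unfolding constants_def by simp
  qed
qed

lemma diag_eq_constants:
  assumes "s \<in> S" "y \<in> Sdot S m" "diag s = constants y"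
  shows "act_map (Sdot S m) (rmult m) s = const_map (Sdot S m) y"
proof (rule act_map_rmult_eq_const_map[OF sg faithful assms(1,2)])
  show "\<forall>x\<in>X. \<forall>z\<in>X. act z s = act_opt act x y"
  proof (intro ballI)
    fix x z assume "x \<in> X" "z \<in> X"
    then obtain i where "i < n" "e i = x" using enum_onto by blast
    moreover have "diag s i z = constants y i z" using \<open>diag s = constants y\<close> by simp
    ultimately show "act z s = act_opt act x y" using \<open>z \<in> X\<close> unfolding diag_def constants_def by simp
  qed
qed

lemma rel_injective: "rel f w \<Longrightarrow> rel g w \<Longrightarrow> f = g"
  unfolding rel_def using diag_inj constants_inj diag_eq_constants by metis

lemma diag_mult_diag:
  "s \<in> S \<Longrightarrow> t \<in> S \<Longrightarrow> (\<lambda>i\<in>{..<n}. comp_on X (diag s i) (diag t i)) = diag (m s t)"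
  unfolding diag_def by (auto simp: comp_on_act_map[OF faithful] intro!: restrict_ext)

lemma diag_mult_constants:
  "s \<in> S \<Longrightarrow> (\<lambda>i\<in>{..<n}. comp_on X (diag s i) (constants z i)) = constants z"
  unfolding diag_def constants_def
  by (auto simp: comp_on_act_map_const_map[OF faithful] intro!: restrict_ext)

lemma constants_mult_diag:
  "y \<in> Sdot S m \<Longrightarrow> t \<in> S \<Longrightarrow>
    (\<lambda>i\<in>{..<n}. comp_on X (constants y i) (diag t i)) = constants (rmult m y t)"
  unfolding diag_def constants_def
  by (auto simp: comp_on_const_map_act_map enum_in act_opt_in[OF faithful] act_opt_rmult[OF faithful]
      intro!: restrict_ext)

lemma constants_mult_constants:
  "y \<in> Sdot S m \<Longrightarrow> (\<lambda>i\<in>{..<n}. comp_on X (constants y i) (constants z i)) = constants z"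
  unfolding constants_def
  by (auto simp: comp_on_const_map enum_in act_opt_in[OF faithful] intro!: restrict_ext)

lemma rel_mult:
  assumes "rel f v" "rel g w"
  shows "rel (comp_on (Sdot S m) f g) (\<lambda>i\<in>{..<n}. comp_on X (v i) (w i))"
proof -
  have rmult: "faithful_action (Sdot S m) (rmult m) S m" using sg by (rule faithful_action_rmult)
  have "m s t \<in> S" if "s \<in> S" "t \<in> S" for s t using sg that unfolding semigroup_on_def by blast
  moreover have "rmult m y t \<in> Sdot S m" if "y \<in> Sdot S m" "t \<in> S" for y t
    using rmult that unfolding faithful_action_def by blast
  ultimately show ?thesis
    using assms unfolding rel_def
    by (auto simp: diag_mult_diag diag_mult_constants constants_mult_diag constants_mult_constants
        comp_on_act_map[OF rmult] comp_on_act_map_const_map[OF rmult]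
        comp_on_const_map_act_map comp_on_const_map)
qed

lemma Sbar_sg_divides_sg_power: "sg_divides (Sbar S m) (sg_power n (with_consts X act S))"
proof (rule sg_divides_if_injective_relation[where R = rel],
    unfold Sbar_def with_consts_def sg_power_def fst_conv snd_conv)
  show "f \<in> maps_of (Sdot S m) (rmult m) S \<union> consts_on (Sdot S m)
      \<and> w \<in> PiE {..<n} (\<lambda>_. maps_of X act S \<union> consts_on X)" if "rel f w" for f w
    using that enum_in act_opt_in[OF faithful]
    unfolding rel_def diag_def constants_def maps_of_def consts_on_def by auto
  show "\<exists>w. rel f w" if "f \<in> maps_of (Sdot S m) (rmult m) S \<union> consts_on (Sdot S m)" for f
    using that unfolding rel_def maps_of_def consts_on_def by blast
  show "maps_of (Sdot S m) (rmult m) S \<union> consts_on (Sdot S m) \<noteq> {}"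
    using sg unfolding maps_of_def semigroup_on_def by blast
qed (fact rel_mult rel_injective)+

end

lemma Sbar_sg_divides_sg_power:
  assumes "semigroup_on S m" "faithful_action X act S m" "finite X"
  shows "sg_divides (Sbar S m) (sg_power (card X) (with_consts X act S))"
proof -
  obtain e where "bij_betw e {..<card X} X"
    using ex_bij_betw_nat_finite[OF \<open>finite X\<close>] by (auto simp: lessThan_atLeast0)
  with assms(1,2) interpret enumerated_action S m X act "card X" e
    by unfold_locales
  show ?thesis by (rule Sbar_sg_divides_sg_power)
qed

lemma pv_mem_with_consts_iff_Sbar:
  assumes sg: "semigroup_on S m" and "finite X" and act: "faithful_action X act S m"
    and ts: "ts_divides (X, maps_of X act S) (Sdot S m, maps_of (Sdot S m) (rmult m) S)"
  shows "pv_mem U (with_consts X act S) \<longleftrightarrow> pv_mem U (Sbar S m)"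
proof
  have "sg_divides (with_consts X act S) (Sbar S m)"
    unfolding Sbar_def using sg act sg faithful_action_rmult[OF sg] ts
    by (rule with_consts_sg_divides_if_ts_divides)
  then show "pv_mem U (with_consts X act S) \<Longrightarrow> pv_mem U (Sbar S m)"
    by (rule pv_mem_if_sg_divides)
next
  assume "pv_mem U (Sbar S m)"
  with Sbar_sg_divides_sg_power[OF sg act \<open>finite X\<close>]
  have "pv_mem U (sg_power (card X) (with_consts X act S))" by (rule pv_mem_if_sg_divides)
  with magma_with_consts[OF sg act] show "pv_mem U (with_consts X act S)"
    by (rule pv_mem_of_sg_power)
qed

lemma right_ideal_ts_divides:
  assumes "right_ideal S m J"
  shows "ts_divides (J, maps_of J m S) (Sdot S m, maps_of (Sdot S m) (rmult m) S)"
  unfolding ts_divides_def fst_conv snd_conv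
proof (intro exI[of _ "Some ` J"] exI[of _ the] conjI ballI)
  have J: "J \<subseteq> S" "\<forall>j\<in>J. \<forall>s\<in>S. m j s \<in> J" using assms unfolding right_ideal_def by auto
  then show "Some ` J \<subseteq> Sdot S m" unfolding Sdot_def by auto
  show "the ` Some ` J = J" by (simp add: image_image)
  fix a assume "a \<in> maps_of J m S"
  then obtain s where s: "s \<in> S" "a = act_map J m s" unfolding maps_of_def by blast
  show "\<exists>t\<in>maps_of (Sdot S m) (rmult m) S. \<forall>y\<in>Some ` J. t y \<in> Some ` J \<and> a (the y) = the (t y)"
  proof (intro bexI[of _ "act_map (Sdot S m) (rmult m) s"] ballI conjI)
    show "act_map (Sdot S m) (rmult m) s \<in> maps_of (Sdot S m) (rmult m) S"
      unfolding maps_of_def using s by blast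
    fix y assume "y \<in> Some ` J"
    then obtain j where j: "j \<in> J" "y = Some j" by blast
    then have "y \<in> Sdot S m" using J unfolding Sdot_def by auto
    then show "act_map (Sdot S m) (rmult m) s y \<in> Some ` J" "a (the y) = the (act_map (Sdot S m) (rmult m) s y)"
      using j J s by (simp_all add: rmult_def)
  qed
qed

theorem corollary2p3:
  shows "(\<forall>(S::'a set) m (X::'x set) act.
            semigroup_on S m \<and> finite X \<and> faithful_action X act S m \<and>
            ts_divides (X, maps_of X act S) (Sdot S m, maps_of (Sdot S m) (rmult m) S)
            \<longrightarrow> (\<forall>(U::'u set) mu. pv_mem (U, mu) (with_consts X act S) \<longleftrightarrow> pv_mem (U, mu) (Sbar S m)))
       \<and> (\<forall>(S::'b set) m J.
            semigroup_on S m \<and> right_ideal S m J \<and> faithful_action J m S m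
            \<longrightarrow> (\<forall>(U::'v set) mu. pv_mem (U, mu) (Sbar S m) \<longleftrightarrow> pv_mem (U, mu) (with_consts J m S)))"
proof (intro conjI allI impI; elim conjE)
  fix S :: "'a set" and m X act and U :: "'u set" and mu
  assume "semigroup_on S m" "finite X" "faithful_action X act S m"
    "ts_divides (X, maps_of X act S) (Sdot S m, maps_of (Sdot S m) (rmult m) S)"
  then show "pv_mem (U, mu) (with_consts X act S) \<longleftrightarrow> pv_mem (U, mu) (Sbar S m)"
    by (rule pv_mem_with_consts_iff_Sbar)
next
  fix S :: "'b set" and m J and U :: "'v set" and mu
  assume sg: "semigroup_on S m" and J: "right_ideal S m J" and act: "faithful_action J m S m"
  have "finite J"
    using J sg finite_subset unfolding right_ideal_def semigroup_on_def by blast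
  with sg act right_ideal_ts_divides[OF J]
  show "pv_mem (U, mu) (Sbar S m) \<longleftrightarrow> pv_mem (U, mu) (with_consts J m S)"
    using pv_mem_with_consts_iff_Sbar by blast
qed

end
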